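(* Let $\mathbb{V}$ be a finite-dimensional real inner product space, $\mathcal{C}\subseteq\mathbb{V}$ a convex set, $\varphi:\mathbb{V}\to\mathbb{R}\cup\{+\infty\}$ a Legendre function, and $f:\mathcal{C}\to\mathbb{R}$ a function differentiable on $\operatorname{relint}\mathcal{C}$ satisfying $f(x)=\langle x,\nabla f(x)\rangle$ for all $x\in\mathcal{C}$. Then $f$ is $L$-smooth relative to $\varphi$ on $\mathcal{C}$ if and only if $$\langle x,\nabla f(x)-\nabla f(y)\rangle\le L\,D_\varphi(x\,\|\,y)\qquad\text{for all }x,y\in\operatorname{relint}\mathcal{C}.$$ Similarly, $f$ is $\mu$-strongly convex relative to $\varphi$ on $\mathcal{C}$ if and only if $$\langle x,\nabla f(x)-\nabla f(y)\rangle\ge \mu\,D_\varphi(x\,\|\,y)\qquad\text{for all }x,y\in\operatorname{relint}\mathcal{C}.$$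
   Context: A function $\varphi:\mathbb{V}\to\mathbb{R}\cup\{+\infty\}$ is Legendre if it is proper, lower semicontinuous, strictly convex and essentially smooth. Its Bregman divergence is $D_\varphi(x\,\|\,y)=\varphi(x)-\varphi(y)-\langle\nabla\varphi(y),x-y\rangle$ for $x\in\operatorname{dom}\varphi$, $y\in\operatorname{relint}\operatorname{dom}\varphi$ (here $\mathcal{C}\subseteq\operatorname{dom}\varphi$). $f$ is $L$-smooth relative to $\varphi$ on $\mathcal{C}$ (for $L>0$) if $L\varphi-f$ is convex on $\operatorname{relint}\mathcal{C}$; $f$ is $\mu$-strongly convex relative to $\varphi$ on $\mathcal{C}$ (for $\mu>0$) if $f-\mu\varphi$ is convex on $\operatorname{relint}\mathcal{C}$. *)

theory Defs
  imports "HOL-Analysis.Analysis"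
begin

text \<open>Extended-real valued functions \<open>\<phi> :: 'a \<Rightarrow> ereal\<close> model functions into
  \<open>\<real> \<union> {+\<infinity>}\<close> (properness rules out the value \<open>-\<infinity>\<close>).\<close>

definition edom :: "('a \<Rightarrow> ereal) \<Rightarrow> 'a set" where
  "edom \<phi> = {x. \<phi> x < \<infinity>}"

definition proper_fun :: "('a \<Rightarrow> ereal) \<Rightarrow> bool" where
  "proper_fun \<phi> \<longleftrightarrow> (\<forall>x. \<phi> x \<noteq> -\<infinity>) \<and> (\<exists>x. \<phi> x < \<infinity>)"

definition lsc_fun :: "('a::topological_space \<Rightarrow> ereal) \<Rightarrow> bool" where
  "lsc_fun \<phi> \<longleftrightarrow> (\<forall>x. \<phi> x \<le> Liminf (at x) \<phi>)"

text \<open>Strict convexity of an extended-valued function: its domain is convex and the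
  strict convexity inequality holds between distinct points of the domain
  (outside the domain the right-hand side is \<open>+\<infinity>\<close>).\<close>
definition strictly_convex_fun :: "('a::real_vector \<Rightarrow> ereal) \<Rightarrow> bool" where
  "strictly_convex_fun \<phi> \<longleftrightarrow> convex (edom \<phi>) \<and>
     (\<forall>x\<in>edom \<phi>. \<forall>y\<in>edom \<phi>. \<forall>t::real. x \<noteq> y \<and> 0 < t \<and> t < 1 \<longrightarrow>
        real_of_ereal (\<phi> (t *\<^sub>R x + (1 - t) *\<^sub>R y))
          < t * real_of_ereal (\<phi> x) + (1 - t) * real_of_ereal (\<phi> y))"

definition egrad :: "('a::euclidean_space \<Rightarrow> ereal) \<Rightarrow> 'a \<Rightarrow> 'a" where
  "egrad \<phi> y = (SOME v. ((\<lambda>z. real_of_ereal (\<phi> z)) has_derivative (\<lambda>h. v \<bullet> h)) (at y))"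

definition ediff_at :: "('a::euclidean_space \<Rightarrow> ereal) \<Rightarrow> 'a \<Rightarrow> bool" where
  "ediff_at \<phi> y \<longleftrightarrow> (\<exists>v. ((\<lambda>z. real_of_ereal (\<phi> z)) has_derivative (\<lambda>h. v \<bullet> h)) (at y))"

definition essentially_smooth :: "('a::euclidean_space \<Rightarrow> ereal) \<Rightarrow> bool" where
  "essentially_smooth \<phi> \<longleftrightarrow>
     interior (edom \<phi>) \<noteq> {} \<and>
     (\<forall>y\<in>interior (edom \<phi>). ediff_at \<phi> y) \<and>
     (\<forall>xs b. (\<forall>k. xs k \<in> interior (edom \<phi>)) \<and> xs \<longlonglongrightarrow> b \<and> b \<in> frontier (interior (edom \<phi>))
        \<longrightarrow> filterlim (\<lambda>k. norm (egrad \<phi> (xs k))) at_top sequentially)"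

definition legendre :: "('a::euclidean_space \<Rightarrow> ereal) \<Rightarrow> bool" where
  "legendre \<phi> \<longleftrightarrow> proper_fun \<phi> \<and> lsc_fun \<phi> \<and> strictly_convex_fun \<phi> \<and> essentially_smooth \<phi>"

definition bregman :: "('a::euclidean_space \<Rightarrow> ereal) \<Rightarrow> 'a \<Rightarrow> 'a \<Rightarrow> real" where
  "bregman \<phi> x y = real_of_ereal (\<phi> x) - real_of_ereal (\<phi> y) - egrad \<phi> y \<bullet> (x - y)"

definition rel_smooth :: "real \<Rightarrow> ('a::euclidean_space \<Rightarrow> real) \<Rightarrow> ('a \<Rightarrow> ereal) \<Rightarrow> 'a set \<Rightarrow> bool" where
  "rel_smooth L f \<phi> C \<longleftrightarrow> convex_on (rel_interior C) (\<lambda>x. L * real_of_ereal (\<phi> x) - f x)"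

definition rel_strongly_convex :: "real \<Rightarrow> ('a::euclidean_space \<Rightarrow> real) \<Rightarrow> ('a \<Rightarrow> ereal) \<Rightarrow> 'a set \<Rightarrow> bool" where
  "rel_strongly_convex \<mu> f \<phi> C \<longleftrightarrow> convex_on (rel_interior C) (\<lambda>x. f x - \<mu> * real_of_ereal (\<phi> x))"

end

theory Submission imports Defs begin

text \<open>Relative smoothness and relative strong convexity are convexity statements about
  \<open>L \<phi> - f\<close> and \<open>f - \<mu> \<phi>\<close>. For differentiable functions on a convex set, convexity of a
  difference \<open>g\<^sub>1 - g\<^sub>2\<close> means that the linearization gap of \<open>g\<^sub>2\<close> is dominated by that of
  \<open>g\<^sub>1\<close>. The gap of \<open>L \<phi>\<close> is \<open>L D\<^sub>\<phi>(x \<parallel> y)\<close>, and Euler's identity \<open>f x = \<langle>x, \<nabla>f x\<rangle>\<close>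
  collapses the gap of \<open>f\<close> to \<open>\<langle>x, \<nabla>f x - \<nabla>f y\<rangle>\<close>.\<close>

definition linearization_gap :: "('a::real_inner \<Rightarrow> real) \<Rightarrow> ('a \<Rightarrow> 'a) \<Rightarrow> 'a \<Rightarrow> 'a \<Rightarrow> real" where
  "linearization_gap g G x y = g x - g y - G y \<bullet> (x - y)"

lemma linearization_gap_diff:
  "linearization_gap (\<lambda>z. g\<^sub>1 z - g\<^sub>2 z) (\<lambda>z. G\<^sub>1 z - G\<^sub>2 z) x y
     = linearization_gap g\<^sub>1 G\<^sub>1 x y - linearization_gap g\<^sub>2 G\<^sub>2 x y"
  by (simp add: linearization_gap_def inner_diff_left)

lemma linearization_gap_scale:
  "linearization_gap (\<lambda>z. c * g z) (\<lambda>z. c *\<^sub>R G z) x y = c * linearization_gap g G x y"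
  by (simp add: linearization_gap_def algebra_simps)

lemma linearization_gap_euler:
  assumes "g x = x \<bullet> G x" and "g y = y \<bullet> G y"
  shows "linearization_gap g G x y = x \<bullet> (G x - G y)"
  using assms by (simp add: linearization_gap_def inner_diff_left inner_diff_right inner_commute)

lemma bregman_eq_linearization_gap:
  "bregman \<phi> x y = linearization_gap (\<lambda>z. real_of_ereal (\<phi> z)) (egrad \<phi>) x y"
  by (simp add: bregman_def linearization_gap_def)

lemma has_derivative_within_convex_directional:
  fixes h :: "'a::real_inner \<Rightarrow> real"
  assumes S: "convex S" and x: "x \<in> S" and y: "y \<in> S"
    and d: "(h has_derivative (\<lambda>v. g \<bullet> v)) (at y within S)"
  shows "((\<lambda>t. (h (y + t *\<^sub>R (x - y)) - h y) / t) \<longlongrightarrow> g \<bullet> (x - y)) (at_right 0)"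
proof -
  define p where "p = (\<lambda>t::real. y + t *\<^sub>R (x - y))"
  have "p ` {0..1} \<subseteq> S"
  proof clarify
    fix t :: real assume "t \<in> {0..1}"
    moreover have "p t = (1 - t) *\<^sub>R y + t *\<^sub>R x" by (simp add: p_def algebra_simps)
    ultimately show "p t \<in> S" using convexD_alt[OF S y x] by auto
  qed
  then have dh: "(h has_derivative (\<lambda>v. g \<bullet> v)) (at (p 0) within p ` {0..1})"
    using has_derivative_subset[OF d] by (simp add: p_def)
  have dp: "(p has_derivative (\<lambda>t. t *\<^sub>R (x - y))) (at 0 within {0..1})"
    unfolding p_def by (auto intro!: derivative_eq_intros)
  have "((h \<circ> p) has_derivative (\<lambda>t. t * (g \<bullet> (x - y)))) (at 0 within {0..1})"
    using diff_chain_within[OF dp dh] by (simp add: o_def mult.commute)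
  then have "((h \<circ> p) has_field_derivative (g \<bullet> (x - y))) (at 0 within {0..1})"
    by (simp add: has_field_derivative_def mult_commute_abs)
  then show ?thesis
    using at_within_Icc_at_right[of "0::real" 1] by (simp add: has_field_derivative_iff p_def)
qed

lemma convex_on_above_tangent:
  fixes h :: "'a::real_inner \<Rightarrow> real"
  assumes S: "convex S" and cv: "convex_on S h" and x: "x \<in> S" and y: "y \<in> S"
    and d: "(h has_derivative (\<lambda>v. g \<bullet> v)) (at y within S)"
  shows "h y + g \<bullet> (x - y) \<le> h x"
proof -
  have "\<forall>\<^sub>F t in at_right 0. (h (y + t *\<^sub>R (x - y)) - h y) / t \<le> h x - h y"
    using eventually_at_right_real[OF zero_less_one]
  proof eventually_elim
    case (elim t)
    have "y + t *\<^sub>R (x - y) = (1 - t) *\<^sub>R y + t *\<^sub>R x" by (simp add: algebra_simps)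
    then have "h (y + t *\<^sub>R (x - y)) - h y \<le> t * (h x - h y)"
      using convex_onD[OF cv, of t y x] elim x y by (simp add: algebra_simps)
    then show ?case using elim by (simp add: divide_le_eq mult.commute)
  qed
  then have "g \<bullet> (x - y) \<le> h x - h y"
    using tendsto_upperbound[OF has_derivative_within_convex_directional[OF S x y d]] by simp
  then show ?thesis by simp
qed

lemma above_tangent_imp_convex_on:
  fixes h :: "'a::real_inner \<Rightarrow> real"
  assumes S: "convex S" and tangent: "\<And>x y. x \<in> S \<Longrightarrow> y \<in> S \<Longrightarrow> h y + G y \<bullet> (x - y) \<le> h x"
  shows "convex_on S h"
proof (rule convex_onI[OF _ S])
  fix t :: real and x y assume t: "0 < t" "t < 1" and x: "x \<in> S" and y: "y \<in> S"
  define z where "z = (1 - t) *\<^sub>R x + t *\<^sub>R y"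
  have z: "z \<in> S" unfolding z_def using convexD[OF S x y, of "1 - t" t] t by simp
  have "(1 - t) * (h z + G z \<bullet> (x - z)) + t * (h z + G z \<bullet> (y - z)) \<le> (1 - t) * h x + t * h y"
    using tangent[OF x z] tangent[OF y z] t by (intro add_mono mult_left_mono) auto
  moreover have "(1 - t) * (h z + G z \<bullet> (x - z)) + t * (h z + G z \<bullet> (y - z)) = h z"
  proof -
    have "(1 - t) *\<^sub>R (x - z) + t *\<^sub>R (y - z) = 0" by (simp add: z_def algebra_simps)
    then have "G z \<bullet> ((1 - t) *\<^sub>R (x - z) + t *\<^sub>R (y - z)) = 0" by simp
    then show ?thesis by (simp add: inner_add_right algebra_simps)
  qed
  ultimately show "h ((1 - t) *\<^sub>R x + t *\<^sub>R y) \<le> (1 - t) * h x + t * h y" by (simp add: z_def)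
qed

lemma convex_on_iff_linearization_gap_nonneg:
  fixes h :: "'a::real_inner \<Rightarrow> real"
  assumes S: "convex S"
    and d: "\<And>y. y \<in> S \<Longrightarrow> (h has_derivative (\<lambda>v. G y \<bullet> v)) (at y within S)"
  shows "convex_on S h \<longleftrightarrow> (\<forall>x\<in>S. \<forall>y\<in>S. 0 \<le> linearization_gap h G x y)"
proof -
  have "0 \<le> linearization_gap h G x y \<longleftrightarrow> h y + G y \<bullet> (x - y) \<le> h x" for x y
    by (auto simp: linearization_gap_def)
  then show ?thesis
    using convex_on_above_tangent[OF S _ _ _ d] above_tangent_imp_convex_on[OF S] by blast
qed

lemma convex_on_diff_iff_linearization_gap_le:
  fixes g\<^sub>1 g\<^sub>2 :: "'a::real_inner \<Rightarrow> real"
  assumes S: "convex S"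
    and d\<^sub>1: "\<And>y. y \<in> S \<Longrightarrow> (g\<^sub>1 has_derivative (\<lambda>v. G\<^sub>1 y \<bullet> v)) (at y within S)"
    and d\<^sub>2: "\<And>y. y \<in> S \<Longrightarrow> (g\<^sub>2 has_derivative (\<lambda>v. G\<^sub>2 y \<bullet> v)) (at y within S)"
  shows "convex_on S (\<lambda>x. g\<^sub>1 x - g\<^sub>2 x) \<longleftrightarrow>
           (\<forall>x\<in>S. \<forall>y\<in>S. linearization_gap g\<^sub>2 G\<^sub>2 x y \<le> linearization_gap g\<^sub>1 G\<^sub>1 x y)"
proof -
  have "((\<lambda>x. g\<^sub>1 x - g\<^sub>2 x) has_derivative (\<lambda>v. (G\<^sub>1 y - G\<^sub>2 y) \<bullet> v)) (at y within S)"
    if "y \<in> S" for y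
    using has_derivative_diff[OF d\<^sub>1 d\<^sub>2, OF that that] by (simp add: inner_diff_left)
  from convex_on_iff_linearization_gap_nonneg[OF S this] show ?thesis
    by (simp add: linearization_gap_diff)
qed

lemma legendre_has_derivative_egrad:
  assumes "legendre \<phi>" and "y \<in> interior (edom \<phi>)"
  shows "((\<lambda>z. real_of_ereal (\<phi> z)) has_derivative (\<lambda>v. egrad \<phi> y \<bullet> v)) (at y)"
proof -
  have "ediff_at \<phi> y" using assms unfolding legendre_def essentially_smooth_def by blast
  then show ?thesis unfolding ediff_at_def egrad_def by (rule someI_ex)
qed

theorem mainTheorem3:
  fixes \<phi> :: "'a::euclidean_space \<Rightarrow> ereal"
    and f :: "'a \<Rightarrow> real" and gf :: "'a \<Rightarrow> 'a"
    and C :: "'a set" and L \<mu> :: real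
  assumes "convex C"
    and "legendre \<phi>"
    and "C \<subseteq> edom \<phi>"
    and "rel_interior C \<subseteq> interior (edom \<phi>)"
    and grad: "\<And>x. x \<in> rel_interior C \<Longrightarrow> (f has_derivative (\<lambda>h. gf x \<bullet> h)) (at x within rel_interior C)"
    and homog: "\<And>x. x \<in> rel_interior C \<Longrightarrow> f x = x \<bullet> gf x"
    and "L > 0" and "\<mu> > 0"
  shows "(rel_smooth L f \<phi> C \<longleftrightarrow>
            (\<forall>x\<in>rel_interior C. \<forall>y\<in>rel_interior C. x \<bullet> (gf x - gf y) \<le> L * bregman \<phi> x y))
       \<and> (rel_strongly_convex \<mu> f \<phi> C \<longleftrightarrow>
            (\<forall>x\<in>rel_interior C. \<forall>y\<in>rel_interior C. x \<bullet> (gf x - gf y) \<ge> \<mu> * bregman \<phi> x y))"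
proof -
  let ?S = "rel_interior C"
  have S: "convex ?S" using \<open>convex C\<close> by (rule convex_rel_interior)
  have d\<^sub>\<phi>: "((\<lambda>z. c * real_of_ereal (\<phi> z)) has_derivative (\<lambda>v. (c *\<^sub>R egrad \<phi> y) \<bullet> v)) (at y within ?S)"
    if "y \<in> ?S" for y c
    using has_derivative_mult_right[OF legendre_has_derivative_egrad[OF \<open>legendre \<phi>\<close>]] that \<open>rel_interior C \<subseteq> interior (edom \<phi>)\<close>
    by (auto intro: has_derivative_at_withinI)
  have gap_f: "linearization_gap f gf x y = x \<bullet> (gf x - gf y)" if "x \<in> ?S" "y \<in> ?S" for x y
    using linearization_gap_euler homog that by blast
  have "rel_smooth L f \<phi> C \<longleftrightarrow> (\<forall>x\<in>?S. \<forall>y\<in>?S.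
      linearization_gap f gf x y \<le> linearization_gap (\<lambda>z. L * real_of_ereal (\<phi> z)) (\<lambda>z. L *\<^sub>R egrad \<phi> z) x y)"
    unfolding rel_smooth_def by (rule convex_on_diff_iff_linearization_gap_le[OF S d\<^sub>\<phi> grad])
  moreover have "rel_strongly_convex \<mu> f \<phi> C \<longleftrightarrow> (\<forall>x\<in>?S. \<forall>y\<in>?S.
      linearization_gap (\<lambda>z. \<mu> * real_of_ereal (\<phi> z)) (\<lambda>z. \<mu> *\<^sub>R egrad \<phi> z) x y \<le> linearization_gap f gf x y)"
    unfolding rel_strongly_convex_def by (rule convex_on_diff_iff_linearization_gap_le[OF S grad d\<^sub>\<phi>])
  ultimately show ?thesis
    by (simp add: gap_f linearization_gap_scale bregman_eq_linearization_gap)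
qed

end
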